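(* Let $n$ and $d\ge 50$ be positive integers, $c\in[d]$, $\mathcal{F}\subseteq 2^{[n]}$ a hereditary family, and $x\in[n]$ a vertex with $d_{\mathcal{F}}(x)\ge 2^{d-1}-c+1$. Then: (1) if $|N(x)|=d$, then $\omega_{\mathcal{F}}(x)>\mathfrak{B}_c-\frac{1}{18}$; (2) if $|N(x)|>d$, then $\omega_{\mathcal{F}}(x)>\mathfrak{B}_c-\frac{1}{18}+\frac{|N(x)|-d}{6}>\mathfrak{B}_c$.
   Context: A family $\mathcal{F}\subseteq 2^{[n]}$ is hereditary if $F'\subseteq F\in\mathcal{F}$ implies $F'\in\mathcal{F}$. $d_{\mathcal{F}}(x)=|\{F\in\mathcal{F}:x\in F\}|$; $N(x)=\bigcup_{x\in F\in\mathcal{F}}F$. The weight of $x$ is $\omega_{\mathcal{F}}(x)=\sum_{x\in F\in\mathcal{F}}\frac{1}{|F|}$. For $1\le c\le d$, $\mathfrak{B}_c=\frac{2^d-c}{d}$ if $1\le c\le d-1$ and $\mathfrak{B}_d=\frac{2^d-d-\frac12}{d}$. *)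

theory Defs
  imports Complex_Main
begin

definition hereditary :: "'a set set \<Rightarrow> bool" where
  "hereditary \<F> \<longleftrightarrow> (\<forall>F \<in> \<F>. \<forall>F'. F' \<subseteq> F \<longrightarrow> F' \<in> \<F>)"

definition degree :: "'a set set \<Rightarrow> 'a \<Rightarrow> nat" where
  "degree \<F> x = card {F \<in> \<F>. x \<in> F}"

definition nbhd :: "'a set set \<Rightarrow> 'a \<Rightarrow> 'a set" where
  "nbhd \<F> x = \<Union> {F \<in> \<F>. x \<in> F}"

definition weight :: "'a set set \<Rightarrow> 'a \<Rightarrow> real" where
  "weight \<F> x = (\<Sum>F \<in> {F \<in> \<F>. x \<in> F}. 1 / real (card F))"

definition frakB :: "nat \<Rightarrow> nat \<Rightarrow> real" where
  "frakB d c = (if c = d then (2 ^ d - real d - 1/2) / real d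
                else (2 ^ d - real c) / real d)"

end

(*
  Deleting x from the sets containing it turns the star of x into its link, a hereditary family
  with degree(x) members on N(x) - {x}, and turns the weight of x into the sum of 1/(|S| + 1) over
  the link.  Write B_k(N) = sum_(i<N) 1/(s(i) + k + 1), s(i) = popcount i, for the k-shifted
  weight of the first N sets of the binary order.  Splitting a hereditary family along a vertex
  into deletion and link, together with B_k(a + b) <= B_k(a) + B_(k+1)(b) for b <= a, shows that
  among hereditary families with N members the weight is minimised by that segment; in particular
  B_0(2^D) = (2^(D+1) - 1)/(D + 1).  For N >= 2^(d-1) - c + 1 the c - 1 missing sets below 2^(d-1)
  cost at most (c - 1 + sum_(i<d-1) s(i)/(d - s(i)))/d, and the digit-sum estimate
  sum_(i<d-1) s(i)/(d - s(i)) < d/18 (by computation for d < 70, by averaging for d >= 70)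
  gives (1).  For (2), each vertex y of N(x) - {x} is a singleton of the link, so splitting the
  link along y leaves a nonempty part containing y; whenever the other part has more than half of
  the next power of 2 members, the splitting inequality improves by 1/6, and this happens for all
  but about log2 N of the vertices.
*)

theory Submission
  imports Defs "HOL-Library.Discrete_Functions"
begin

section \<open>Binary digit sums\<close>

fun popcount :: "nat \<Rightarrow> nat" where
  "popcount n = (if n = 0 then 0 else n mod 2 + popcount (n div 2))"

declare popcount.simps [simp del]

lemma popcount_0 [simp]: "popcount 0 = 0"
  by (simp add: popcount.simps)

lemma popcount_double [simp]: "popcount (2 * n) = popcount n"
  by (cases "n = 0") (simp_all add: popcount.simps [of "2 * n"])

lemma popcount_Suc_double [simp]: "popcount (Suc (2 * n)) = Suc (popcount n)"
  by (simp add: popcount.simps [of "Suc (2 * n)"])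

lemma popcount_Suc_0 [simp]: "popcount (Suc 0) = 1"
  using popcount_Suc_double [of 0] by simp

lemma popcount_Suc_le: "popcount (Suc n) \<le> Suc (popcount n)"
proof (induction n rule: less_induct)
  case (less n)
  show ?case
  proof (cases "even n")
    case True
    then show ?thesis by (auto elim: evenE)
  next
    case False
    then obtain m where n: "n = Suc (2 * m)" by (auto elim: oddE)
    then have "popcount (Suc n) = popcount (Suc m)"
      using popcount_double [of "Suc m"] by simp
    with n less.IH [of m] show ?thesis by simp
  qed
qed

lemma popcount_power2 [simp]: "popcount (2 ^ K) = 1"
  by (induction K) simp_all

lemma popcount_power2_minus_1: "popcount (2 ^ K - 1) = K"
proof (induction K)
  case (Suc K)
  have "(2::nat) ^ K > 0"
    by simp
  then have "2 * (2::nat) ^ K - 1 = Suc (2 * (2 ^ K - 1))"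
    by linarith
  with Suc show ?case by simp
qed simp

lemma popcount_le: "i < 2 ^ K \<Longrightarrow> popcount i \<le> K"
proof (induction K arbitrary: i)
  case (Suc K)
  define j where "j = i div 2"
  have "i = 2 * j \<or> i = Suc (2 * j)"
    unfolding j_def by presburger
  with Suc.prems Suc.IH [of j] show ?case
    by auto
qed simp

lemma popcount_complement: "i < 2 ^ K \<Longrightarrow> popcount i + popcount (2 ^ K - Suc i) = K"
proof (induction K arbitrary: i)
  case (Suc K)
  show ?case
  proof (cases "even i")
    case True
    then obtain j where i: "i = 2 * j" by (auto elim: evenE)
    with Suc.prems have j: "j < 2 ^ K" by simp
    then have "(2::nat) ^ Suc K - Suc i = Suc (2 * (2 ^ K - Suc j))"
      using i by (simp add: Suc_diff_Suc)
    with i Suc.IH [OF j] show ?thesis by simp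
  next
    case False
    then obtain j where i: "i = Suc (2 * j)" by (auto elim: oddE)
    with Suc.prems have j: "j < 2 ^ K" by simp
    then have "(2::nat) ^ Suc K - Suc i = 2 * (2 ^ K - Suc j)"
      using i by simp
    with i Suc.IH [OF j] show ?thesis by simp
  qed
qed simp

lemma sum_lessThan_double: "(\<Sum>i<2 * n. f i) = (\<Sum>i<n. f (2 * i) + f (Suc (2 * i)))"
  by (induction n) (simp_all add: algebra_simps)

lemma sum_lessThan_halves: "(\<Sum>i<N. f i) = (\<Sum>i<(N + 1) div 2. f (2 * i)) + (\<Sum>i<N div 2. f (Suc (2 * i)))"
proof (cases "even N")
  case True
  then show ?thesis
    by (auto elim!: evenE simp: sum_lessThan_double sum.distrib)
next
  case False
  then obtain M where "N = Suc (2 * M)"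
    by (auto elim: oddE)
  then show ?thesis
    by (simp add: sum_lessThan_double sum.distrib add_ac)
qed

lemma sum_popcount_power2: "(\<Sum>i<2 ^ K. f (popcount i)) = (\<Sum>j\<le>K. of_nat (K choose j) * f j)"
proof (induction K arbitrary: f)
  case (Suc K)
  have "(\<Sum>i<2 ^ Suc K. f (popcount i)) = (\<Sum>i<2 ^ K. f (popcount i)) + (\<Sum>i<2 ^ K. f (Suc (popcount i)))"
    by (simp add: sum_lessThan_double sum.distrib)
  also have "\<dots> = (\<Sum>j\<le>K. of_nat (K choose j) * f j) + (\<Sum>j\<le>K. of_nat (K choose j) * f (Suc j))"
    using Suc.IH [of f] Suc.IH [of "\<lambda>j. f (Suc j)"] by simp
  also have "\<dots> = (\<Sum>j\<le>Suc K. of_nat (K choose j) * f j) + (\<Sum>j\<le>K. of_nat (K choose j) * f (Suc j))"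
    by (simp add: binomial_eq_0)
  also have "\<dots> = (\<Sum>j\<le>Suc K. of_nat (Suc K choose j) * f j)"
    by (simp only: sum.atMost_Suc_shift) (simp add: sum.distrib algebra_simps)
  finally show ?case .
qed simp

lemma sum_popcount_le: "N \<le> 2 ^ K \<Longrightarrow> 2 * (\<Sum>i<N. popcount i) \<le> N * K"
proof (induction K arbitrary: N)
  case 0
  then have "N \<le> 1"
    by simp
  then show ?case
    by (cases N) auto
next
  case (Suc K)
  define N1 N0 where "N1 = (N + 1) div 2" "N0 = N div 2"
  have N: "N1 + N0 = N" "2 * N0 \<le> N" "N1 \<le> 2 ^ K" "N0 \<le> 2 ^ K"
    using Suc.prems unfolding N1_N0_def by simp_all
  have "(\<Sum>i<N. popcount i) = (\<Sum>i<N1. popcount i) + (\<Sum>i<N0. popcount i) + N0"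
    unfolding N1_N0_def by (simp add: sum_lessThan_halves [of _ N] sum_Suc)
  then have "2 * (\<Sum>i<N. popcount i) \<le> N1 * K + N0 * K + 2 * N0"
    using Suc.IH [OF N(3)] Suc.IH [OF N(4)] by linarith
  also have "\<dots> \<le> N * Suc K"
    using N by (simp add: add_mult_distrib [symmetric])
  finally show ?case .
qed

section \<open>Weights of initial segments of the binary order\<close>

(* The i-th finite set of naturals in binary order (bit j of i set iff j is a member) has
   popcount i elements, so this is the shifted weight of the first N sets of that order. *)
definition binseg_weight :: "nat \<Rightarrow> nat \<Rightarrow> real" where
  "binseg_weight k N = (\<Sum>i<N. 1 / (real (popcount i) + real k + 1))"

lemma binseg_weight_0 [simp]: "binseg_weight k 0 = 0"
  by (simp add: binseg_weight_def)

lemma binseg_weight_Suc: "binseg_weight k (Suc N) = binseg_weight k N + 1 / (real (popcount N) + real k + 1)"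
  by (simp add: binseg_weight_def)

lemma binseg_weight_mono: "M \<le> N \<Longrightarrow> binseg_weight k M \<le> binseg_weight k N"
  unfolding binseg_weight_def by (rule sum_mono2) auto

lemma binseg_weight_double: "binseg_weight k (2 * N) = binseg_weight k N + binseg_weight (Suc k) N"
  by (simp add: binseg_weight_def sum_lessThan_double sum.distrib add_ac)

lemma binseg_weight_halves:
  "binseg_weight k N = binseg_weight k ((N + 1) div 2) + binseg_weight (Suc k) (N div 2)"
  unfolding binseg_weight_def by (simp add: sum_lessThan_halves [of _ N] add_ac)

lemma binseg_weight_shift:
  "binseg_weight k (Suc N) + binseg_weight (Suc k) (Suc N) \<le> binseg_weight k (Suc (Suc N)) + binseg_weight (Suc k) N"
proof -
  have "1 / (real (popcount N) + real (Suc k) + 1) \<le> 1 / (real (popcount (Suc N)) + real k + 1)"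
    using popcount_Suc_le [of N] by (intro divide_left_mono) auto
  then show ?thesis by (simp add: binseg_weight_Suc)
qed

lemma binseg_weight_le_halves:
  "binseg_weight k (a + b) \<le> binseg_weight k ((a + 1) div 2 + (b + 1) div 2) + binseg_weight (Suc k) (a div 2 + b div 2)"
proof (cases "odd a \<and> odd b")
  case True
  define N where "N = a div 2 + b div 2"
  have sum: "a + b = 2 * Suc N" and halves: "(a + 1) div 2 + (b + 1) div 2 = Suc (Suc N)"
    using True unfolding N_def by presburger+
  have "binseg_weight k (a + b) = binseg_weight k (Suc N) + binseg_weight (Suc k) (Suc N)"
    unfolding sum by (rule binseg_weight_double)
  also have "\<dots> \<le> binseg_weight k (Suc (Suc N)) + binseg_weight (Suc k) N"
    by (rule binseg_weight_shift)
  finally show ?thesis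
    unfolding halves N_def [symmetric] .
next
  case False
  then have "(a + 1) div 2 + (b + 1) div 2 = (a + b + 1) div 2" "a div 2 + b div 2 = (a + b) div 2"
    by presburger+
  then show ?thesis
    using binseg_weight_halves [of k "a + b"] by simp
qed

lemma binseg_weight_add_le:
  "b \<le> a \<Longrightarrow> binseg_weight k (a + b) \<le> binseg_weight k a + binseg_weight (Suc k) b"
proof (induction "a + b" arbitrary: a b k rule: less_induct)
  case less
  show ?case
  proof (cases "a \<le> 1")
    case True
    with less.prems consider "b = 0" | "a = 1" "b = 1" by linarith
    then show ?thesis by cases (simp_all add: binseg_weight_Suc)
  next
    case False
    define a1 a0 b1 b0 where "a1 = (a + 1) div 2" "a0 = a div 2" "b1 = (b + 1) div 2" "b0 = b div 2"
    have "a1 + b1 < a + b" "b1 \<le> a1" "a0 + b0 < a + b" "b0 \<le> a0"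
      using False less.prems unfolding a1_a0_b1_b0_def by presburger+
    then have "binseg_weight k (a1 + b1) \<le> binseg_weight k a1 + binseg_weight (Suc k) b1"
      and "binseg_weight (Suc k) (a0 + b0) \<le> binseg_weight (Suc k) a0 + binseg_weight (Suc (Suc k)) b0"
      using less.hyps by blast+
    moreover have "binseg_weight k (a + b) \<le> binseg_weight k (a1 + b1) + binseg_weight (Suc k) (a0 + b0)"
      unfolding a1_a0_b1_b0_def by (rule binseg_weight_le_halves)
    moreover have "binseg_weight k a = binseg_weight k a1 + binseg_weight (Suc k) a0"
      "binseg_weight (Suc k) b = binseg_weight (Suc k) b1 + binseg_weight (Suc (Suc k)) b0"
      unfolding a1_a0_b1_b0_def by (rule binseg_weight_halves)+
    ultimately show ?thesis by linarith
  qed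
qed

(* 2^K - 1 has K binary digits while 2^K has one, which is where the gain comes from. *)
lemma binseg_weight_power2_shift_gain:
  assumes "1 \<le> K"
  shows "binseg_weight k (2 * 2 ^ K) + (1 / (real k + 2) - 1 / (real k + 3))
    \<le> binseg_weight k (Suc (2 ^ K)) + binseg_weight (Suc k) (2 ^ K - 1)"
proof -
  have gain: "1 / (real K + real k + 2) \<le> 1 / (real k + 3)"
    using assms by (intro divide_left_mono) auto
  have "binseg_weight (Suc k) (2 ^ K) = binseg_weight (Suc k) (2 ^ K - 1) + 1 / (real K + real k + 2)"
    using binseg_weight_Suc [of "Suc k" "2 ^ K - 1"] popcount_power2_minus_1 [of K] by simp
  moreover have "binseg_weight k (Suc (2 ^ K)) = binseg_weight k (2 ^ K) + 1 / (real k + 2)"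
    using binseg_weight_Suc [of k "2 ^ K"] by simp
  ultimately show ?thesis
    using gain by (simp add: binseg_weight_double)
qed

lemma binseg_weight_add_le_gain:
  assumes "1 \<le> b" "b \<le> a" "2 ^ K < a" "a + b \<le> 2 ^ Suc K"
  shows "binseg_weight k (a + b) + (1 / (real k + 2) - 1 / (real k + 3))
    \<le> binseg_weight k a + binseg_weight (Suc k) b"
  using assms
proof (induction K arbitrary: a b)
  case 0
  then show ?case by simp
next
  case (Suc K)
  define s :: nat where "s = 2 ^ K"
  define a1 a0 b1 b0 where "a1 = (a + 1) div 2" "a0 = a div 2" "b1 = (b + 1) div 2" "b0 = b div 2"
  define gain where "gain = 1 / (real k + 2) - 1 / (real k + 3)"
  have lin: "2 * s < a" "a + b \<le> 4 * s"
    using Suc.prems(3,4) by (simp_all add: s_def)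
  have halves: "a0 + a1 = a" "b0 + b1 = b" "a0 \<le> a1" "b0 \<le> b1" "a1 \<le> Suc a0" "b1 \<le> Suc b0"
    unfolding a1_a0_b1_b0_def by presburger+
  have bounds: "1 \<le> b1" "b1 \<le> a1" "b0 \<le> a0" "s < a1"
    using Suc.prems(1,2) lin halves by linarith+
  have "binseg_weight k (a + b) + gain \<le> binseg_weight k a1 + binseg_weight (Suc k) b1 + binseg_weight (Suc k) (a0 + b0)"
  proof (cases "a1 + b1 \<le> 2 * s")
    case True
    have "binseg_weight k (a1 + b1) + gain \<le> binseg_weight k a1 + binseg_weight (Suc k) b1"
      using Suc.IH [of b1 a1] bounds True unfolding gain_def s_def by simp
    moreover have "binseg_weight k (a + b) \<le> binseg_weight k (a1 + b1) + binseg_weight (Suc k) (a0 + b0)"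
      unfolding a1_a0_b1_b0_def by (rule binseg_weight_le_halves)
    ultimately show ?thesis by linarith
  next
    case False
    with lin halves have "a + b = 2 * (2 * s)" "a1 + b1 = Suc (2 * s)" "a0 + b0 = 2 * s - 1"
      by linarith+
    then have "binseg_weight k (a + b) + gain \<le> binseg_weight k (a1 + b1) + binseg_weight (Suc k) (a0 + b0)"
      using binseg_weight_power2_shift_gain [of "Suc K" k] unfolding gain_def s_def by simp
    moreover have "binseg_weight k (a1 + b1) \<le> binseg_weight k a1 + binseg_weight (Suc k) b1"
      using bounds by (simp add: binseg_weight_add_le)
    ultimately show ?thesis by linarith
  qed
  moreover have "binseg_weight (Suc k) (a0 + b0) \<le> binseg_weight (Suc k) a0 + binseg_weight (Suc (Suc k)) b0"
    using bounds by (simp add: binseg_weight_add_le)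
  moreover have "binseg_weight k a = binseg_weight k a1 + binseg_weight (Suc k) a0"
    "binseg_weight (Suc k) b = binseg_weight (Suc k) b1 + binseg_weight (Suc (Suc k)) b0"
    unfolding a1_a0_b1_b0_def by (rule binseg_weight_halves)+
  ultimately show ?case
    unfolding gain_def by linarith
qed

lemma binseg_weight_add: "binseg_weight k (M + r) = binseg_weight k M + (\<Sum>j<r. 1 / (real (popcount (M + j)) + real k + 1))"
  by (induction r) (simp_all add: binseg_weight_Suc)

lemma binseg_weight_power2: "binseg_weight 0 (2 ^ D) = (2 ^ Suc D - 1) / real (Suc D)"
proof -
  have "binseg_weight 0 (2 ^ D) = (\<Sum>j\<le>D. real (D choose j) * (1 / (real j + 1)))"
    unfolding binseg_weight_def using sum_popcount_power2 [of "\<lambda>p. 1 / (real p + real 0 + 1)"] by simp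
  also have "\<dots> = (\<Sum>j\<le>D. real (Suc D choose Suc j)) / real (Suc D)"
    unfolding sum_divide_distrib
  proof (rule sum.cong)
    fix j
    have "real (Suc D) * real (D choose j) = real (Suc D choose Suc j) * real (Suc j)"
      using Suc_times_binomial_eq [of D j] by (metis of_nat_mult)
    then show "real (D choose j) * (1 / (real j + 1)) = real (Suc D choose Suc j) / real (Suc D)"
      by (simp add: field_simps)
  qed simp
  also have "(\<Sum>j\<le>D. real (Suc D choose Suc j)) = 2 ^ Suc D - 1"
  proof -
    have "1 + (\<Sum>j\<le>D. Suc D choose Suc j) = 2 ^ Suc D"
      using choose_row_sum [of "Suc D"] by (simp only: sum.atMost_Suc_shift binomial_n_0)
    then have "real (1 + (\<Sum>j\<le>D. Suc D choose Suc j)) = 2 ^ Suc D"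
      by (metis of_nat_numeral of_nat_power)
    then show ?thesis
      by simp
  qed
  finally show ?thesis .
qed

lemma binseg_weight_power2_diff:
  assumes "r \<le> 2 ^ D"
  shows "binseg_weight 0 (2 ^ D) - binseg_weight 0 (2 ^ D - r) = (\<Sum>i<r. 1 / (real (Suc D) - real (popcount i)))"
proof -
  define M where "M = 2 ^ D - r"
  have "binseg_weight 0 (2 ^ D) - binseg_weight 0 M = (\<Sum>j<r. 1 / (real (popcount (M + j)) + 1))"
    using binseg_weight_add [of 0 M r] assms unfolding M_def by simp
  also have "\<dots> = (\<Sum>i<r. 1 / (real (popcount (M + (r - Suc i))) + 1))"
    by (rule sum.nat_diff_reindex [symmetric])
  also have "\<dots> = (\<Sum>i<r. 1 / (real (Suc D) - real (popcount i)))"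
  proof (rule sum.cong)
    fix i
    assume "i \<in> {..<r}"
    then have "M + (r - Suc i) = 2 ^ D - Suc i" "popcount i + popcount (2 ^ D - Suc i) = D"
      using assms unfolding M_def by (auto intro: popcount_complement)
    then show "1 / (real (popcount (M + (r - Suc i))) + 1) = 1 / (real (Suc D) - real (popcount i))"
      by (simp add: algebra_simps flip: of_nat_add)
  qed simp
  finally show ?thesis
    unfolding M_def .
qed

lemma power2_quotient_step:
  assumes "2 \<le> K"
  shows "(2 ^ K - 1) / real K - real K / 6 \<le> (2 ^ Suc K - 1) / real (Suc K) - real (Suc K) / 6"
proof -
  have "real K + 1 \<le> 2 ^ K"
    using less_exp [of K] by (metis Suc_eq_plus1 Suc_leI of_nat_1 of_nat_add of_nat_le_iff of_nat_numeral of_nat_power)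
  then have "(real K - 1) * (real K + 1) \<le> (real K - 1) * 2 ^ K"
    using assms by (intro mult_left_mono) auto
  moreover have "2 * real K \<le> real K * real K"
    using assms by (intro mult_right_mono) auto
  ultimately have "real K * (real K + 1) \<le> 6 * ((real K - 1) * 2 ^ K + 1)"
    by (simp add: algebra_simps)
  then show ?thesis
    using assms by (simp add: field_simps)
qed

lemma power2_quotient_mono:
  assumes "2 \<le> d" "d \<le> K"
  shows "(2 ^ d - 1) / real d - real d / 6 \<le> (2 ^ K - 1) / real K - real K / 6"
  using assms(2)
proof (induction K rule: dec_induct)
  case (step K)
  then show ?case
    using power2_quotient_step [of K] assms(1) by linarith
qed simp

section \<open>Links and deletions\<close>

definition link :: "'a set set \<Rightarrow> 'a \<Rightarrow> 'a set set" where
  "link \<F> x = (\<lambda>S. S - {x}) ` {S \<in> \<F>. x \<in> S}"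

definition deletion :: "'a set set \<Rightarrow> 'a \<Rightarrow> 'a set set" where
  "deletion \<F> x = {S \<in> \<F>. x \<notin> S}"

definition shifted_weight :: "nat \<Rightarrow> 'a set set \<Rightarrow> real" where
  "shifted_weight k \<F> = (\<Sum>S\<in>\<F>. 1 / (real (card S) + real k + 1))"

lemma inj_on_remove_link: "inj_on (\<lambda>S. S - {x}) {S \<in> \<F>. x \<in> S}"
  by (rule inj_onI) (metis (no_types, lifting) insert_Diff mem_Collect_eq)

lemma card_link: "card (link \<F> x) = degree \<F> x"
  unfolding link_def degree_def by (rule card_image [OF inj_on_remove_link])

lemma sum_link: "(\<Sum>S\<in>link \<F> x. f S) = (\<Sum>S\<in>{S \<in> \<F>. x \<in> S}. f (S - {x}))"
  unfolding link_def by (rule sum.reindex [OF inj_on_remove_link, unfolded comp_def])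

lemma hereditary_link:
  assumes "hereditary \<F>"
  shows "hereditary (link \<F> x)"
  unfolding hereditary_def
proof (intro ballI allI impI)
  fix S T
  assume "S \<in> link \<F> x" "T \<subseteq> S"
  then obtain U where "U \<in> \<F>" "x \<in> U" "S = U - {x}"
    unfolding link_def by blast
  with \<open>T \<subseteq> S\<close> assms have "insert x T \<in> \<F>" "T = insert x T - {x}"
    unfolding hereditary_def by blast+
  then show "T \<in> link \<F> x"
    unfolding link_def by blast
qed

lemma hereditary_deletion: "hereditary \<F> \<Longrightarrow> hereditary (deletion \<F> x)"
  unfolding hereditary_def deletion_def by blast

lemma link_subset_deletion: "hereditary \<F> \<Longrightarrow> link \<F> x \<subseteq> deletion \<F> x"
  unfolding hereditary_def link_def deletion_def by blast

lemma singleton_mem_hereditary: "hereditary \<F> \<Longrightarrow> y \<in> \<Union>\<F> \<Longrightarrow> {y} \<in> \<F>"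
  unfolding hereditary_def by blast

lemma deletion_link_partition:
  "\<F> = deletion \<F> x \<union> {S \<in> \<F>. x \<in> S}" "deletion \<F> x \<inter> {S \<in> \<F>. x \<in> S} = {}"
  unfolding deletion_def by blast+

lemma card_deletion_link:
  assumes "finite \<F>"
  shows "card \<F> = card (deletion \<F> x) + card (link \<F> x)"
proof -
  have "card \<F> = card (deletion \<F> x) + card {S \<in> \<F>. x \<in> S}"
    using card_Un_disjoint [of "deletion \<F> x" "{S \<in> \<F>. x \<in> S}"] assms deletion_link_partition [of \<F> x]
    by (simp add: deletion_def)
  then show ?thesis
    by (simp add: card_link degree_def)
qed

lemma shifted_weight_deletion_link:
  assumes "finite \<F>" "\<forall>S\<in>\<F>. finite S"
  shows "shifted_weight k \<F> = shifted_weight k (deletion \<F> x) + shifted_weight (Suc k) (link \<F> x)"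
proof -
  have "shifted_weight (Suc k) (link \<F> x) = (\<Sum>S\<in>{S \<in> \<F>. x \<in> S}. 1 / (real (card S) + real k + 1))"
    unfolding shifted_weight_def sum_link
  proof (intro sum.cong refl)
    fix S
    assume "S \<in> {S \<in> \<F>. x \<in> S}"
    with assms(2) have "card S = Suc (card (S - {x}))"
      by (metis (mono_tags, lifting) card_Suc_Diff1 mem_Collect_eq)
    then show "1 / (real (card (S - {x})) + real (Suc k) + 1) = 1 / (real (card S) + real k + 1)"
      by simp
  qed
  moreover have "shifted_weight k \<F> = shifted_weight k (deletion \<F> x) + (\<Sum>S\<in>{S \<in> \<F>. x \<in> S}. 1 / (real (card S) + real k + 1))"
    unfolding shifted_weight_def
    using sum.union_disjoint [of "deletion \<F> x" "{S \<in> \<F>. x \<in> S}"] assms(1) deletion_link_partition [of \<F> x]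
    by (simp add: deletion_def)
  ultimately show ?thesis
    by simp
qed

lemma weight_eq_shifted_weight_link:
  assumes "\<forall>S\<in>\<F>. finite S"
  shows "weight \<F> x = shifted_weight 0 (link \<F> x)"
  unfolding weight_def shifted_weight_def sum_link
proof (intro sum.cong refl)
  fix S
  assume "S \<in> {S \<in> \<F>. x \<in> S}"
  with assms have "card S = Suc (card (S - {x}))"
    by (metis (mono_tags, lifting) card_Suc_Diff1 mem_Collect_eq)
  then show "1 / real (card S) = 1 / (real (card (S - {x})) + real 0 + 1)"
    by simp
qed

lemma nbhd_eq_insert_link: "0 < degree \<F> x \<Longrightarrow> nbhd \<F> x = insert x (\<Union>(link \<F> x))"
  unfolding nbhd_def link_def degree_def by (auto simp: card_gt_0_iff)

lemma notin_Union_link: "x \<notin> \<Union>(link \<F> x)"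
  unfolding link_def by blast

lemma link_hereditary_on_support:
  assumes "finite U" "\<F> \<subseteq> Pow U" "hereditary \<F>"
  shows "finite (\<Union>(link \<F> x))" "link \<F> x \<subseteq> Pow (\<Union>(link \<F> x))" "hereditary (link \<F> x)"
    "\<forall>y\<in>\<Union>(link \<F> x). {y} \<in> link \<F> x"
proof -
  show "finite (\<Union>(link \<F> x))"
    using assms(1,2) unfolding link_def by (auto intro: finite_subset [of _ U])
  show "link \<F> x \<subseteq> Pow (\<Union>(link \<F> x))"
    by blast
  show her: "hereditary (link \<F> x)"
    using assms(3) by (rule hereditary_link)
  show "\<forall>y\<in>\<Union>(link \<F> x). {y} \<in> link \<F> x"
    using singleton_mem_hereditary [OF her] by blast
qed

section \<open>Downsets of minimum weight\<close>

lemma deletion_link_on_smaller_ground_set: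
  assumes "finite V" "y \<notin> V" "\<F> \<subseteq> Pow (insert y V)" "hereditary \<F>"
  shows "deletion \<F> y \<subseteq> Pow V" "link \<F> y \<subseteq> Pow V"
    and "hereditary (deletion \<F> y)" "hereditary (link \<F> y)"
    and "card (link \<F> y) \<le> card (deletion \<F> y)"
    and "card \<F> = card (deletion \<F> y) + card (link \<F> y)"
    and "shifted_weight k \<F> = shifted_weight k (deletion \<F> y) + shifted_weight (Suc k) (link \<F> y)"
proof -
  have fin: "finite \<F>" "\<forall>S\<in>\<F>. finite S"
    using assms(1,3) by (auto intro: finite_subset)
  show "deletion \<F> y \<subseteq> Pow V" "link \<F> y \<subseteq> Pow V"
    using assms(2,3) by (auto simp: deletion_def link_def)
  show "hereditary (deletion \<F> y)" "hereditary (link \<F> y)"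
    using assms(4) by (simp_all add: hereditary_deletion hereditary_link)
  show "card (link \<F> y) \<le> card (deletion \<F> y)"
    using link_subset_deletion [OF assms(4)] fin(1) by (intro card_mono) (auto simp: deletion_def)
  show "card \<F> = card (deletion \<F> y) + card (link \<F> y)"
    by (rule card_deletion_link [OF fin(1)])
  show "shifted_weight k \<F> = shifted_weight k (deletion \<F> y) + shifted_weight (Suc k) (link \<F> y)"
    by (rule shifted_weight_deletion_link [OF fin])
qed

lemma binseg_weight_le_shifted_weight:
  assumes "finite V" "\<F> \<subseteq> Pow V" "hereditary \<F>"
  shows "binseg_weight k (card \<F>) \<le> shifted_weight k \<F>"
  using assms
proof (induction V arbitrary: \<F> k rule: finite_induct)
  case empty
  then have "\<F> = {} \<or> \<F> = {{}}"
    by auto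
  then show ?case
    by (auto simp: shifted_weight_def binseg_weight_Suc)
next
  case (insert y V)
  note split = deletion_link_on_smaller_ground_set [OF insert.hyps insert.prems]
  have "binseg_weight k (card \<F>) \<le> binseg_weight k (card (deletion \<F> y)) + binseg_weight (Suc k) (card (link \<F> y))"
    using split(5,6) binseg_weight_add_le by simp
  also have "\<dots> \<le> shifted_weight k (deletion \<F> y) + shifted_weight (Suc k) (link \<F> y)"
    using insert.IH split(1-4) by (simp add: add_mono)
  finally show ?case
    using split(7) by simp
qed

lemma binseg_weight_support_step:
  fixes v w :: real
  assumes IH: "\<And>K. a \<le> 2 ^ K \<Longrightarrow> binseg_weight k a + (v - real K) * (1 / (real k + 2) - 1 / (real k + 3)) \<le> w"
    and "1 \<le> b" "b \<le> a" "a + b \<le> 2 ^ K"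
  shows "binseg_weight k (a + b) + (v + 1 - real K) * (1 / (real k + 2) - 1 / (real k + 3))
    \<le> w + binseg_weight (Suc k) b"
proof -
  define g where "g = 1 / (real k + 2) - 1 / (real k + 3)"
  obtain K' where K': "K = Suc K'"
    using assms(2-4) by (cases K) auto
  show ?thesis
    unfolding g_def [symmetric]
  proof (cases "a \<le> 2 ^ K'")
    case True
    have "binseg_weight k (a + b) \<le> binseg_weight k a + binseg_weight (Suc k) b"
      using assms(3) by (rule binseg_weight_add_le)
    moreover have "(v + 1 - real K) * g = (v - real K') * g"
      using K' by simp
    ultimately show "binseg_weight k (a + b) + (v + 1 - real K) * g \<le> w + binseg_weight (Suc k) b"
      using IH [OF True] unfolding g_def by linarith
  next
    case False
    then have "binseg_weight k (a + b) + g \<le> binseg_weight k a + binseg_weight (Suc k) b"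
      using binseg_weight_add_le_gain [of b a K' k] assms(2-4) K' unfolding g_def by simp
    moreover have "(v + 1 - real K) * g = (v - real K) * g + g"
      by (simp add: algebra_simps)
    ultimately show "binseg_weight k (a + b) + (v + 1 - real K) * g \<le> w + binseg_weight (Suc k) b"
      using IH [of K] assms(4) unfolding g_def by linarith
  qed
qed

lemma binseg_weight_plus_support_le_shifted_weight:
  assumes "finite V" "\<F> \<subseteq> Pow V" "hereditary \<F>" "\<forall>y\<in>V. {y} \<in> \<F>" "card \<F> \<le> 2 ^ K"
  shows "binseg_weight k (card \<F>) + (real (card V) - real K) * (1 / (real k + 2) - 1 / (real k + 3))
    \<le> shifted_weight k \<F>"
  using assms
proof (induction V arbitrary: \<F> K rule: finite_induct)
  case empty
  have "1 / (real k + 3) \<le> 1 / (real k + 2)"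
    by (intro divide_left_mono) auto
  then have "0 \<le> real K * (1 / (real k + 2) - 1 / (real k + 3))"
    by simp
  with binseg_weight_le_shifted_weight [OF _ empty.prems(1,2), of k] show ?case
    by simp
next
  case (insert y V)
  let ?D = "deletion \<F> y" and ?L = "link \<F> y"
  note split = deletion_link_on_smaller_ground_set [OF insert.hyps insert.prems(1,2)]
  have "\<forall>z\<in>V. {z} \<in> ?D"
    using insert.prems(3) insert.hyps(2) by (auto simp: deletion_def)
  note IH = insert.IH [OF split(1,3) this]
  have "{y} \<in> \<F>"
    using insert.prems(3) by simp
  then have "{y} - {y} \<in> ?L"
    unfolding link_def by blast
  then have "1 \<le> card ?L"
    using split(2) insert.hyps(1) by (auto simp: Suc_le_eq card_gt_0_iff intro: finite_subset)
  then have "binseg_weight k (card \<F>) + (real (card V) + 1 - real K) * (1 / (real k + 2) - 1 / (real k + 3))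
      \<le> shifted_weight k ?D + binseg_weight (Suc k) (card ?L)"
    using binseg_weight_support_step [OF IH] split(5,6) insert.prems(4) by simp
  moreover have "binseg_weight (Suc k) (card ?L) \<le> shifted_weight (Suc k) ?L"
    using binseg_weight_le_shifted_weight [OF insert.hyps(1) split(2,4)] .
  moreover have "real (card (insert y V)) = real (card V) + 1"
    using insert.hyps by simp
  ultimately show ?case
    using split(7) by (simp only:)
qed

lemma shifted_weight_ge_min_plus_support:
  assumes "finite V" "\<F> \<subseteq> Pow V" "hereditary \<F>" "\<forall>y\<in>V. {y} \<in> \<F>" "2 \<le> d"
  shows "min (binseg_weight 0 (card \<F>)) ((2 ^ d - 1) / real d) + (real (card V) + 1 - real d) / 6
    \<le> shifted_weight 0 \<F>"
proof (cases "card \<F> \<le> 2 ^ (d - 1)")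
  case True
  then have "binseg_weight 0 (card \<F>) + (real (card V) + 1 - real d) / 6 \<le> shifted_weight 0 \<F>"
    using binseg_weight_plus_support_le_shifted_weight [OF assms(1-4), of "d - 1" 0] assms(5)
    by (simp add: of_nat_diff algebra_simps diff_divide_distrib)
  then show ?thesis
    by (meson add_right_mono min.cobounded1 order_trans)
next
  case False
  define K where "K = floor_log (card \<F> - 1)"
  have "(1::nat) \<le> 2 ^ (d - 1)"
    by simp
  with False have "1 < card \<F>"
    by linarith
  then have K: "2 ^ K < card \<F>" "card \<F> \<le> 2 ^ Suc K"
    using floor_log_exp2_le [of "card \<F> - 1"] floor_log_exp2_gt [of "card \<F> - 1"] unfolding K_def by auto
  have "d \<le> Suc K"
  proof (rule ccontr)
    assume "\<not> d \<le> Suc K"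
    then have "(2::nat) ^ Suc K \<le> 2 ^ (d - 1)"
      by (intro power_increasing) auto
    with False K(2) show False
      by linarith
  qed
  have "binseg_weight 0 (Suc (2 ^ K)) \<le> binseg_weight 0 (card \<F>)"
    using K(1) by (intro binseg_weight_mono) simp
  moreover have "binseg_weight 0 (Suc (2 ^ K)) = (2 ^ Suc K - 1) / real (Suc K) + 1 / 2"
    using binseg_weight_power2 [of K] by (simp add: binseg_weight_Suc)
  moreover have "binseg_weight 0 (card \<F>) + (real (card V) - real (Suc K)) / 6 \<le> shifted_weight 0 \<F>"
    using binseg_weight_plus_support_le_shifted_weight [OF assms(1-4) K(2), of 0] by simp
  moreover have "(2 ^ d - 1) / real d - real d / 6 \<le> (2 ^ Suc K - 1) / real (Suc K) - real (Suc K) / 6"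
    using power2_quotient_mono assms(5) \<open>d \<le> Suc K\<close> by blast
  moreover have "min (binseg_weight 0 (card \<F>)) ((2 ^ d - 1) / real d) \<le> (2 ^ d - 1) / real d"
    by simp
  ultimately show ?thesis
    by (simp only: diff_divide_distrib add_divide_distrib)
qed

lemma weight_ge_binseg_weight_degree:
  assumes "finite U" "\<F> \<subseteq> Pow U" "hereditary \<F>"
  shows "binseg_weight 0 (degree \<F> x) \<le> weight \<F> x"
proof -
  have "\<forall>S\<in>\<F>. finite S"
    using assms(1,2) by (auto intro: finite_subset)
  moreover have "binseg_weight 0 (card (link \<F> x)) \<le> shifted_weight 0 (link \<F> x)"
    using link_hereditary_on_support [OF assms] by (intro binseg_weight_le_shifted_weight)
  ultimately show ?thesis
    by (simp add: weight_eq_shifted_weight_link card_link)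
qed

lemma weight_ge_min_plus_nbhd:
  assumes "finite U" "\<F> \<subseteq> Pow U" "hereditary \<F>" "0 < degree \<F> x" "2 \<le> d"
  shows "min (binseg_weight 0 (degree \<F> x)) ((2 ^ d - 1) / real d) + (real (card (nbhd \<F> x)) - real d) / 6
    \<le> weight \<F> x"
proof -
  have "\<forall>S\<in>\<F>. finite S"
    using assms(1,2) by (auto intro: finite_subset)
  moreover have "card (nbhd \<F> x) = card (\<Union>(link \<F> x)) + 1"
    using nbhd_eq_insert_link [OF assms(4)] card_insert_disjoint [OF link_hereditary_on_support(1) [OF assms(1-3)] notin_Union_link]
    by simp
  ultimately show ?thesis
    using shifted_weight_ge_min_plus_support [OF link_hereditary_on_support [OF assms(1-3)] assms(5)]
    by (simp add: weight_eq_shifted_weight_link card_link add.commute)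
qed

section \<open>The digit-sum estimate\<close>

lemma sum_list_map_eq_sum_count_list:
  "\<forall>x\<in>set xs. x < (m::nat) \<Longrightarrow> sum_list (map h xs) = (\<Sum>p<m. of_nat (count_list xs p) * (h p :: 'a::comm_semiring_1))"
proof (induction xs)
  case (Cons x xs)
  have "(\<Sum>p<m. of_nat (count_list (x # xs) p) * h p)
      = (\<Sum>p<m. of_nat (count_list xs p) * h p + (if x = p then h p else 0))"
    by (intro sum.cong) (auto simp: algebra_simps)
  also have "\<dots> = (\<Sum>p<m. of_nat (count_list xs p) * h p) + (\<Sum>p<m. if x = p then h p else 0)"
    by (rule sum.distrib)
  also have "(\<Sum>p<m. if x = p then h p else 0) = h x"
    using Cons.prems by (simp add: sum.delta')
  finally show ?case
    using Cons by (simp add: add.commute)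
qed simp

(* Below 2^7 all digit sums are less than 8, so grouping the terms by digit sum leaves only
   eight rational summands; this keeps the evaluation by code_simp cheap. *)
definition popcount_ratio_check :: "nat \<Rightarrow> bool" where
  "popcount_ratio_check d = (let ps = map popcount [0..<d - 1] in
    (\<Sum>p\<leftarrow>[0..<8]. of_nat (count_list ps p) * (of_nat p / (of_nat d - of_nat p))) < (of_nat d / 18 :: rat))"

lemma popcount_ratio_check_50_70: "list_all popcount_ratio_check [50..<70]"
  by code_simp

lemma popcount_ratio_sum_lt_small:
  assumes "50 \<le> d" "d < 70"
  shows "(\<Sum>i<d - 1. real (popcount i) / (real d - real (popcount i))) < real d / 18"
proof -
  have "popcount i < 8" if "i < d - 1" for i
  proof -
    have "i < 2 ^ 7"
      using that assms by (simp add: numeral_eq_Suc)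
    then show ?thesis
      using popcount_le [of i 7] by simp
  qed
  then have "\<forall>x\<in>set (map popcount [0..<d - 1]). x < 8"
    by auto
  define g :: "nat \<Rightarrow> rat" where "g p = of_nat p / (of_nat d - of_nat p)" for p
  have "(\<Sum>i<d - 1. g (popcount i)) = sum_list (map g (map popcount [0..<d - 1]))"
    by (simp add: interv_sum_list_conv_sum_set_nat atLeast0LessThan)
  also have "\<dots> = (\<Sum>p<8. of_nat (count_list (map popcount [0..<d - 1]) p) * g p)"
    using \<open>\<forall>x\<in>set (map popcount [0..<d - 1]). x < 8\<close> by (rule sum_list_map_eq_sum_count_list)
  also have "\<dots> = (\<Sum>p\<leftarrow>[0..<8]. of_nat (count_list (map popcount [0..<d - 1]) p) * g p)"
    by (simp add: interv_sum_list_conv_sum_set_nat atLeast0LessThan)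
  also have "\<dots> < of_nat d / 18"
  proof -
    have "popcount_ratio_check d"
      using popcount_ratio_check_50_70 assms unfolding list_all_iff set_upt by simp
    then show ?thesis
      unfolding popcount_ratio_check_def Let_def g_def .
  qed
  finally have "(of_rat (\<Sum>i<d - 1. g (popcount i)) :: real) < of_rat (of_nat d / 18)"
    by (simp only: of_rat_less)
  then show ?thesis
    by (simp add: g_def of_rat_sum of_rat_divide of_rat_diff)
qed

lemma linear_le_power2: "7 \<le> K \<Longrightarrow> 10 * (K + 1) \<le> (2::nat) ^ K"
  by (induction K rule: dec_induct) simp_all

lemma popcount_ratio_sum_lt_large:
  assumes "70 \<le> d"
  shows "(\<Sum>i<d - 1. real (popcount i) / (real d - real (popcount i))) < real d / 18"
proof -
  define K where "K = d div 10"
  have K: "7 \<le> K" "10 * K \<le> d" "d < 10 * (K + 1)"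
    using assms unfolding K_def by simp_all
  then have "d - 1 \<le> 2 ^ K"
    using linear_le_power2 [of K] by linarith
  then have popcount_le_K: "popcount i \<le> K" if "i < d - 1" for i
    using that popcount_le [of i K] by simp
  have dK: "0 < real d - real K"
    using K by simp
  have "real (popcount i) / (real d - real (popcount i)) \<le> real (popcount i) / (real d - real K)"
    if "i < d - 1" for i
    using popcount_le_K [OF that] dK by (intro divide_left_mono mult_pos_pos) auto
  then have "(\<Sum>i<d - 1. real (popcount i) / (real d - real (popcount i)))
      \<le> (\<Sum>i<d - 1. real (popcount i) / (real d - real K))"
    by (intro sum_mono) simp
  also have "\<dots> = real (\<Sum>i<d - 1. popcount i) / (real d - real K)"
    by (simp add: sum_divide_distrib)
  also have "\<dots> \<le> (real (d - 1) * real K / 2) / (real d - real K)"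
  proof (rule divide_right_mono)
    have "real (2 * (\<Sum>i<d - 1. popcount i)) \<le> real ((d - 1) * K)"
      using sum_popcount_le [OF \<open>d - 1 \<le> 2 ^ K\<close>] by (simp only: of_nat_le_iff)
    then show "real (\<Sum>i<d - 1. popcount i) \<le> real (d - 1) * real K / 2"
      by simp
  qed (use dK in simp)
  also have "\<dots> < real d / 18"
  proof -
    have "9 * real K \<le> real d - real K"
      using K by simp
    then have "real d * (9 * real K) \<le> real d * (real d - real K)"
      by (rule mult_left_mono) simp
    moreover have "0 < real K"
      using K by simp
    ultimately have "9 * (real d - 1) * real K < real d * (real d - real K)"
      by (simp add: algebra_simps)
    then show ?thesis
      using dK assms by (simp add: field_simps of_nat_diff)
  qed
  finally show ?thesis .
qed

lemma popcount_ratio_sum_lt: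
  "50 \<le> d \<Longrightarrow> (\<Sum>i<d - 1. real (popcount i) / (real d - real (popcount i))) < real d / 18"
  using popcount_ratio_sum_lt_small popcount_ratio_sum_lt_large by (cases "d < 70") auto

lemma sum_inverse_sub_popcount_lt:
  assumes "50 \<le> d" "r < d"
  shows "(\<Sum>i<r. 1 / (real d - real (popcount i))) < (real r + real d / 18) / real d"
proof -
  have popcount_lt: "real (popcount i) < real d" if "i < d - 1" for i
  proof -
    have "i < 2 ^ (d - 1)"
      using that less_exp [of "d - 1"] by linarith
    then have "popcount i \<le> d - 1"
      by (rule popcount_le)
    with assms(1) show ?thesis
      by simp
  qed
  have "(\<Sum>i<r. 1 / (real d - real (popcount i)))
      = (\<Sum>i<r. 1 / real d + real (popcount i) / (real d - real (popcount i)) / real d)"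
  proof (intro sum.cong refl)
    fix i
    assume "i \<in> {..<r}"
    then have "real (popcount i) < real d"
      using assms(2) popcount_lt by simp
    then show "1 / (real d - real (popcount i)) = 1 / real d + real (popcount i) / (real d - real (popcount i)) / real d"
      using assms(1) by (simp add: field_simps)
  qed
  also have "\<dots> = (real r + (\<Sum>i<r. real (popcount i) / (real d - real (popcount i)))) / real d"
    by (simp add: sum.distrib sum_divide_distrib add_divide_distrib)
  also have "\<dots> \<le> (real r + (\<Sum>i<d - 1. real (popcount i) / (real d - real (popcount i)))) / real d"
    using popcount_lt assms(2)
    by (intro divide_right_mono add_left_mono sum_mono2) (auto simp: less_imp_le)
  also have "\<dots> < (real r + real d / 18) / real d"
    using popcount_ratio_sum_lt [OF assms(1)] assms(1) by (intro divide_strict_right_mono) auto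
  finally show ?thesis .
qed

lemma binseg_weight_gt_near_power2:
  assumes "50 \<le> d" "1 \<le> c" "c \<le> d" "2 ^ (d - 1) < N + c"
  shows "(2 ^ d - real c) / real d - 1 / 18 < binseg_weight 0 N"
proof -
  obtain D where D: "d = Suc D"
    using assms(1) by (cases d) auto
  define r where "r = c - 1"
  have r: "r < d" "real r = real c - 1"
    using assms(2,3) unfolding r_def by simp_all
  moreover have "r \<le> 2 ^ D"
    using r(1) D less_exp [of D] by linarith
  have "binseg_weight 0 (2 ^ D) - binseg_weight 0 (2 ^ D - r) < (real r + real d / 18) / real d"
    using binseg_weight_power2_diff [OF \<open>r \<le> 2 ^ D\<close>] sum_inverse_sub_popcount_lt [OF assms(1) r(1)] D by simp
  moreover have "binseg_weight 0 (2 ^ D - r) \<le> binseg_weight 0 N"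
    using assms(4) D unfolding r_def by (intro binseg_weight_mono) simp
  moreover have "(2 ^ d - real c) / real d - 1 / 18 = binseg_weight 0 (2 ^ D) - (real r + real d / 18) / real d"
    using binseg_weight_power2 [of D] D r(2) assms(1) by (simp add: field_simps)
  ultimately show ?thesis
    by linarith
qed

lemma frakB_le: "0 < d \<Longrightarrow> 1 \<le> c \<Longrightarrow> frakB d c \<le> (2 ^ d - real c) / real d"
  by (simp add: frakB_def divide_right_mono)

theorem mainTheorem12:
  fixes n d c x :: nat and \<F> :: "nat set set"
  assumes "n \<ge> 1" and "d \<ge> 50"
    and "c \<in> {1..d}"
    and "\<F> \<subseteq> Pow {1..n}" and "hereditary \<F>"
    and "x \<in> {1..n}"
    and "real (degree \<F> x) \<ge> 2 ^ (d - 1) - real c + 1"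
  shows "(card (nbhd \<F> x) = d \<longrightarrow> weight \<F> x > frakB d c - 1/18)
       \<and> (card (nbhd \<F> x) > d \<longrightarrow>
            weight \<F> x > frakB d c - 1/18 + (real (card (nbhd \<F> x)) - real d) / 6
          \<and> frakB d c - 1/18 + (real (card (nbhd \<F> x)) - real d) / 6 > frakB d c)"
proof -
  have c: "1 \<le> c" "c \<le> d"
    using assms(3) by simp_all
  have "real (2 ^ (d - 1)) < real (degree \<F> x + c)"
    using assms(7) by simp
  then have degree: "2 ^ (d - 1) < degree \<F> x + c"
    by (simp only: of_nat_less_iff)
  moreover have "d - 1 < 2 ^ (d - 1)"
    by (rule less_exp)
  ultimately have "0 < degree \<F> x"
    using c by linarith
  have frakB: "frakB d c \<le> (2 ^ d - real c) / real d" "(2 ^ d - real c) / real d \<le> (2 ^ d - 1) / real d"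
    using frakB_le c assms(2) by (simp_all add: divide_right_mono)
  have low: "frakB d c - 1 / 18 < binseg_weight 0 (degree \<F> x)"
    using binseg_weight_gt_near_power2 [OF assms(2) c degree] frakB(1) by linarith
  moreover have "frakB d c - 1 / 18 < min (binseg_weight 0 (degree \<F> x)) ((2 ^ d - 1) / real d)"
    using low frakB by simp
  moreover have "binseg_weight 0 (degree \<F> x) \<le> weight \<F> x"
    using weight_ge_binseg_weight_degree [OF _ assms(4,5)] by simp
  moreover have "min (binseg_weight 0 (degree \<F> x)) ((2 ^ d - 1) / real d) + (real (card (nbhd \<F> x)) - real d) / 6
      \<le> weight \<F> x"
    using weight_ge_min_plus_nbhd [OF _ assms(4,5) \<open>0 < degree \<F> x\<close>] assms(2) by simp
  ultimately show ?thesis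
    by auto
qed

end
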